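(* Let $S$ be an AG-groupoid with a left identity. If $B$ is a bi-ideal of $S$ with $B^{2}=B$, then $B$ is a (two-sided) ideal of $S$, i.e. $SB\subseteq B$ and $BS\subseteq B$.
   Context: An AG-groupoid is a set $S$ with a binary operation satisfying $(ab)c=(cb)a$ for all $a,b,c\in S$. A left identity is an element $e$ with $ea=a$ for all $a\in S$. For nonempty subsets, $AB=\{ab:a\in A,b\in B\}$, $B^{2}=BB$. A bi-ideal of $S$ is a nonempty subset $B$ with $BB\subseteq B$ and $(BS)B\subseteq B$. *)

theory Defs
  imports Main
begin

text \<open>An AG-groupoid is modelled as a type 'a (the whole set S) with a binary operation m.\<close>

definition AG_groupoid :: "('a \<Rightarrow> 'a \<Rightarrow> 'a) \<Rightarrow> bool" where
  "AG_groupoid m \<longleftrightarrow> (\<forall>a b c. m (m a b) c = m (m c b) a)"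

definition left_identity :: "('a \<Rightarrow> 'a \<Rightarrow> 'a) \<Rightarrow> 'a \<Rightarrow> bool" where
  "left_identity m e \<longleftrightarrow> (\<forall>a. m e a = a)"

definition setmul :: "('a \<Rightarrow> 'a \<Rightarrow> 'a) \<Rightarrow> 'a set \<Rightarrow> 'a set \<Rightarrow> 'a set" where
  "setmul m A B = {m a b | a b. a \<in> A \<and> b \<in> B}"

definition bi_ideal :: "('a \<Rightarrow> 'a \<Rightarrow> 'a) \<Rightarrow> 'a set \<Rightarrow> bool" where
  "bi_ideal m B \<longleftrightarrow> B \<noteq> {} \<and> setmul m B B \<subseteq> B \<and> setmul m (setmul m B UNIV) B \<subseteq> B"

end

theory Submission
  imports Defs
begin

(* First we derive two identities valid in S:
   the medial law (ab)(cd) = (ac)(bd), which holds in every AG-groupoid, and,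
   using the left identity, the left-permutation law a(bc) = b(ac).
   Idempotency B = BB lets us write every b in B as b = b1 b2 and b1 = c1 c2
   with all factors in B.  For s in S the identities rewrite
     s b = b1 (s b2) = ((s b2) c2) c1 = ((c2 b2) s) c1,
   an element of (BS)B, so SB is contained in B.  Finally
     b s = (b1 b2) s = (s b2) b1
   is a product of an element of SB with one of B, giving BS within B. *)

lemma AG_left_invertive:
  assumes "AG_groupoid m"
  shows "m (m a b) c = m (m c b) a"
  using assms unfolding AG_groupoid_def by blast

lemma AG_medial:
  assumes "AG_groupoid m"
  shows "m (m a b) (m c d) = m (m a c) (m b d)"
proof -
  have "m (m a b) (m c d) = m (m (m c d) b) a"
    by (rule AG_left_invertive[OF assms])
  also have "\<dots> = m (m (m b d) c) a"
    by (simp only: AG_left_invertive[OF assms, of c d b])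
  also have "\<dots> = m (m a c) (m b d)"
    by (rule AG_left_invertive[OF assms])
  finally show ?thesis .
qed

lemma AG_left_permutation:
  assumes "AG_groupoid m" and "left_identity m e"
  shows "m a (m b c) = m b (m a c)"
proof -
  have e: "\<And>x. m e x = x" using assms(2) unfolding left_identity_def by blast
  have "m a (m b c) = m (m e a) (m b c)" by (simp only: e)
  also have "\<dots> = m (m e b) (m a c)" by (rule AG_medial[OF assms(1)])
  finally show ?thesis by (simp only: e)
qed

lemma bi_ideal_mult_closed:
  assumes "bi_ideal m B" and "x \<in> B" and "y \<in> B"
  shows "m x y \<in> B"
  using assms unfolding bi_ideal_def setmul_def by blast

lemma bi_ideal_sandwich:
  assumes "bi_ideal m B" and "x \<in> B" and "y \<in> B"
  shows "m (m x s) y \<in> B"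
  using assms unfolding bi_ideal_def setmul_def by blast

lemma idempotent_factor:
  assumes "setmul m B B = B" and "b \<in> B"
  obtains x y where "x \<in> B" "y \<in> B" "b = m x y"
  using assms unfolding setmul_def by blast

lemma idempotent_bi_ideal_left:
  assumes ag: "AG_groupoid m" and li: "left_identity m e"
    and bi: "bi_ideal m B" and idem: "setmul m B B = B" and b: "b \<in> B"
  shows "m s b \<in> B"
proof -
  obtain b1 b2 where b1: "b1 \<in> B" and b2: "b2 \<in> B" and b_eq: "b = m b1 b2"
    using idempotent_factor[OF idem b] .
  obtain c1 c2 where c1: "c1 \<in> B" and c2: "c2 \<in> B" and b1_eq: "b1 = m c1 c2"
    using idempotent_factor[OF idem b1] .
  have "m s b = m b1 (m s b2)"
    unfolding b_eq by (rule AG_left_permutation[OF ag li])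
  also have "\<dots> = m (m (m s b2) c2) c1"
    unfolding b1_eq by (rule AG_left_invertive[OF ag])
  also have "\<dots> = m (m (m c2 b2) s) c1"
    by (simp only: AG_left_invertive[OF ag, of s b2 c2])
  finally show ?thesis
    using bi_ideal_sandwich[OF bi bi_ideal_mult_closed[OF bi c2 b2] c1] by simp
qed

lemma idempotent_bi_ideal_right:
  assumes ag: "AG_groupoid m" and li: "left_identity m e"
    and bi: "bi_ideal m B" and idem: "setmul m B B = B" and b: "b \<in> B"
  shows "m b s \<in> B"
proof -
  obtain b1 b2 where b1: "b1 \<in> B" and b2: "b2 \<in> B" and b_eq: "b = m b1 b2"
    using idempotent_factor[OF idem b] .
  have "m b s = m (m s b2) b1"
    unfolding b_eq by (rule AG_left_invertive[OF ag])
  moreover have "m s b2 \<in> B"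
    using idempotent_bi_ideal_left[OF ag li bi idem b2] .
  ultimately show ?thesis
    using bi_ideal_mult_closed[OF bi _ b1] by simp
qed

theorem lemma1:
  fixes m :: "'a \<Rightarrow> 'a \<Rightarrow> 'a" and e :: 'a and B :: "'a set"
  assumes "AG_groupoid m"
    and "left_identity m e"
    and "bi_ideal m B"
    and "setmul m B B = B"
  shows "setmul m UNIV B \<subseteq> B \<and> setmul m B UNIV \<subseteq> B"
  unfolding setmul_def
  using idempotent_bi_ideal_left[OF assms] idempotent_bi_ideal_right[OF assms]
  by blast

end
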